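(* Let $g:[0,1]\to[0,1]$ be a continuous piecewise linear unimodal map and let $f(x)=1-|1-2x|$ be the tent map. Suppose there is a piecewise linear homeomorphism $h:[0,1]\to[0,1]$ with $h\circ f=g\circ h$. Then $g$ is linear on some interval $[0,\delta]$, $\delta>0$, with slope $2$, i.e. $g'(0)=2$.
   Context: A map $g:[0,1]\to[0,1]$ is called unimodal if there is $v\in(0,1)$ such that $g$ is increasing on $[0,v]$, decreasing on $[v,1]$, and $g(0)=g(1)=0$, $g(v)=1$. Piecewise linear means continuous with finitely many points of non-differentiability (kinks). *)

theory Defs
  imports "HOL-Analysis.Analysis"
begin

definition piecewise_linear_on :: "real \<Rightarrow> real \<Rightarrow> (real \<Rightarrow> real) \<Rightarrow> bool" where
  "piecewise_linear_on a b g \<longleftrightarrow> continuous_on {a..b} g \<and>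
     (\<exists>(xs :: real list). xs \<noteq> [] \<and> hd xs = a \<and> last xs = b \<and> sorted_wrt (<) xs \<and>
        (\<forall>i < length xs - 1. \<exists>m c. \<forall>x \<in> {xs ! i .. xs ! Suc i}. g x = m * x + c))"

definition unimodal :: "(real \<Rightarrow> real) \<Rightarrow> bool" where
  "unimodal g \<longleftrightarrow> g ` {0..1} \<subseteq> {0..1} \<and>
     (\<exists>v \<in> {0<..<1}. mono_on {0..v} g \<and> antimono_on {v..1} g \<and>
        g 0 = 0 \<and> g 1 = 0 \<and> g v = 1)"

definition tent :: "real \<Rightarrow> real" where
  "tent x = 1 - \<bar>1 - 2 * x\<bar>"

end

theory Submission
  imports Defs
begin

text \<open>The homeomorphism \<open>h\<close> sends 0 to an endpoint, and \<open>h 1 = 0\<close> would force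
  \<open>h 0 = h (tent 1) = g 0 = 0\<close>; so \<open>h 0 = 0\<close>. Near the fixed point 0 the conjugacy \<open>h\<close> is linear, \<open>h x = a x\<close> with \<open>a > 0\<close>, and so is \<open>g\<close>,
  \<open>g y = b y\<close>. For small \<open>x\<close> the conjugacy equation \<open>h (2 x) = g (h x)\<close> reads
  \<open>2 a x = b a x\<close>, whence \<open>b = 2\<close>.\<close>

lemma piecewise_linear_on_affine_at_left:
  assumes "piecewise_linear_on a b f" and "a < b"
  shows "\<exists>d>a. d \<le> b \<and> (\<exists>m c. \<forall>x\<in>{a..d}. f x = m * x + c)"
proof -
  obtain xs where xs: "xs \<noteq> []" "hd xs = a" "last xs = b" "sorted_wrt (<) xs"
    and affine: "\<forall>i < length xs - 1. \<exists>m c. \<forall>x \<in> {xs ! i .. xs ! Suc i}. f x = m * x + c"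
    using assms(1) unfolding piecewise_linear_on_def by blast
  have len: "length xs \<ge> 2"
  proof (rule ccontr)
    assume "\<not> length xs \<ge> 2"
    with xs(1) obtain y where "xs = [y]" by (cases xs; cases "tl xs") auto
    with xs(2,3) assms(2) show False by simp
  qed
  have first: "xs ! 0 = a" using xs(1,2) by (simp add: hd_conv_nth)
  have "xs ! 0 < xs ! 1" using xs(4) len by (simp add: sorted_wrt_iff_nth_less)
  moreover have "xs ! 1 \<le> b"
  proof (cases "length xs = 2")
    case True
    then show ?thesis using xs(1,3) by (simp add: last_conv_nth)
  next
    case False
    then have "xs ! 1 < xs ! (length xs - 1)"
      using xs(4) len by (simp add: sorted_wrt_iff_nth_less)
    then show ?thesis using xs(1,3) by (simp add: last_conv_nth)
  qed
  moreover obtain m c where "\<forall>x \<in> {xs ! 0 .. xs ! 1}. f x = m * x + c"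
    using affine[rule_format, of 0] len by auto
  ultimately show ?thesis using first by blast
qed

lemma piecewise_linear_on_linear_at_0:
  assumes "piecewise_linear_on 0 1 f" and "f 0 = 0"
  shows "\<exists>d>0. d \<le> 1 \<and> (\<exists>m. \<forall>x\<in>{0..d}. f x = m * x)"
proof -
  obtain d m c where d: "d > 0" "d \<le> 1" and affine: "\<forall>x\<in>{0..d}. f x = m * x + c"
    using piecewise_linear_on_affine_at_left[OF assms(1)] by auto
  have "c = 0" using affine[rule_format, of 0] d assms(2) by simp
  with d affine show ?thesis by auto
qed

lemma continuous_inj_on_minimum_at_endpoint:
  fixes h :: "real \<Rightarrow> real"
  assumes "continuous_on {a..b} h" "inj_on h {a..b}" "u \<in> {a..b}"
    and "\<forall>x\<in>{a..b}. h u \<le> h x"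
  shows "u = a \<or> u = b"
proof (rule ccontr)
  assume "\<not> (u = a \<or> u = b)"
  with assms(3) have "a < u" "u < b" by auto
  then have "(h a < h u \<and> h u < h b) \<or> (h b < h u \<and> h u < h a)"
    using continuous_inj_imp_mono[of a u b h] assms(1,2) by auto
  moreover have "h u \<le> h a" "h u \<le> h b" using assms(4) \<open>a < u\<close> \<open>u < b\<close> by auto
  ultimately show False by linarith
qed

lemma tent_conjugacy_fixes_0:
  fixes g h k :: "real \<Rightarrow> real"
  assumes "homeomorphism {0..1} {0..1} h k"
    and "\<forall>x \<in> {0..1}. h (tent x) = g (h x)" and "g 0 = 0"
  shows "h 0 = 0"
proof -
  have image: "h ` {0..1} = {0..1}" and cont: "continuous_on {0..1} h"
    using assms(1) unfolding homeomorphism_def by auto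
  have inj: "inj_on h {0..1}"
    using homeomorphism_apply1[OF assms(1)] by (rule inj_on_inverseI)
  obtain u where u: "u \<in> {0..1}" "h u = 0"
    using image by (metis atLeastAtMost_iff imageE order_refl zero_le_one)
  have "\<forall>x\<in>{0..1}. h u \<le> h x" using image u(2) by auto
  then have "u = 0 \<or> u = 1"
    using continuous_inj_on_minimum_at_endpoint[OF cont inj u(1)] by blast
  moreover have "h 0 = g (h 1)" using assms(2)[rule_format, of 1] by (simp add: tent_def)
  ultimately show ?thesis using u(2) assms(3) by auto
qed

theorem lemma3p21:
  fixes g h k :: "real \<Rightarrow> real"
  assumes "g ` {0..1} \<subseteq> {0..1}"
    and "piecewise_linear_on 0 1 g"
    and "unimodal g"
    and "homeomorphism {0..1} {0..1} h k"
    and "piecewise_linear_on 0 1 h"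
    and "\<forall>x \<in> {0..1}. h (tent x) = g (h x)"
  shows "\<exists>\<delta> > 0. \<forall>x \<in> {0..\<delta>}. g x = g 0 + 2 * x"
proof -
  have g0: "g 0 = 0" using assms(3) unfolding unimodal_def by blast
  have h0: "h 0 = 0" using tent_conjugacy_fixes_0[OF assms(4,6) g0] .
  obtain d1 a where d1: "d1 > 0" "d1 \<le> 1" and h_lin: "\<forall>x\<in>{0..d1}. h x = a * x"
    using piecewise_linear_on_linear_at_0[OF assms(5) h0] by blast
  obtain d2 b where d2: "d2 > 0" and g_lin: "\<forall>y\<in>{0..d2}. g y = b * y"
    using piecewise_linear_on_linear_at_0[OF assms(2) g0] by blast
  have "k (h d1) = d1" "k (h 0) = 0" and h_d1: "h d1 \<in> {0..1}"
    using assms(4) d1 unfolding homeomorphism_def by auto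
  then have "h d1 \<noteq> h 0" using d1(1) by auto
  then have a_pos: "a > 0" using h_d1 h_lin d1 h0 by (auto simp: zero_le_mult_iff)
  define x where "x = min (d1 / 2) (d2 / a)"
  have "x \<le> d1 / 2" "x \<le> d2 / a" unfolding x_def by (rule min.cobounded1, rule min.cobounded2)
  moreover have "x > 0" using d1 d2 a_pos by (simp add: x_def)
  ultimately have x: "x > 0" "2 * x \<le> d1" "a * x \<le> d2"
    using a_pos by (simp_all add: pos_le_divide_eq mult.commute)
  have "a * (2 * x) = h (tent x)" using x d1 h_lin by (simp add: tent_def)
  also have "\<dots> = g (a * x)" using assms(6) x d1 h_lin by simp
  also have "\<dots> = b * (a * x)" using x a_pos g_lin by simp
  finally have "b = 2" using a_pos x by simp
  then show ?thesis using d2 g_lin g0 by auto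
qed

end
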